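(* The operator $(H_3f)(t)=\int_0^1\left(1+\frac12\sqrt[7]{4\left(t-\frac12\right)\left(u-\frac12\right)}\right)f^3(u)\,du$ on $C[0,1]$ has at least two distinct strictly positive fixed points.
   Context: For real $s$, $\sqrt[7]{s}$ denotes the real seventh root (negative for $s<0$). *)

theory Defs
  imports "HOL-Analysis.Analysis"
begin

text \<open>The operator H_3 on C[0,1]; root 7 is the real seventh root (odd root, negative for negative arguments).\<close>
definition H3 :: "(real \<Rightarrow> real) \<Rightarrow> real \<Rightarrow> real" where
  "H3 f t = integral {0..1}
     (\<lambda>u. (1 + (1/2) * root 7 (4 * (t - 1/2) * (u - 1/2))) * (f u) ^ 3)"

end

theory Submission imports Defs begin

(*
  The kernel of H3 factorises: with psi(u) = root 7 (2u - 1)  (odd_root_affine 7 below)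
  we have  root 7 (4 (t - 1/2) (u - 1/2)) = psi(t) * psi(u),
  so H3 f = a + b * psi / 2 with a = \<integral> f^3 and b = \<integral> psi * f^3; the range of H3
  lies in the span of 1 and psi.  It is therefore natural to look for fixed points
  of the form f = A + B * psi.  The moments \<integral>_0^1 psi^k have a closed form, since
  psi^(k+n) is an antiderivative of a multiple of psi^k; for the odd root of degree n
  the k-th moment is n / (2(k + n)) * (1 + (-1)^k).  For n = 7 this turns
  H3 (A + B psi) into an explicit affine function of psi, and the fixed-point
  condition becomes the two cubic equations
    A = A^3 + 7/3 A B^2,     B = 7/6 A^2 B + 7/22 B^3.
  Besides the constant solution (A, B) = (1, 0) they have the solution
  A^2 = 399/476, B^2 = 33/476; since |B| < A both functions are strictly positive
  on [0,1], and they differ at t = 1/2.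
*)

definition odd_root_affine :: "nat \<Rightarrow> real \<Rightarrow> real" where
  "odd_root_affine n u = root n (2 * u - 1)"

lemma odd_root_affine_deriv:
  assumes "odd n" "u \<noteq> 1/2"
  shows "(odd_root_affine n has_real_derivative
           2 * inverse (real n * odd_root_affine n u ^ (n - 1))) (at u)"
proof -
  have "DERIV (root n) (2*u - 1) :> inverse (real n * root n (2*u - 1) ^ (n - Suc 0))"
    using assms by (intro DERIV_real_root_generic) (auto intro: odd_pos)
  moreover have "((\<lambda>u. 2*u - 1) has_real_derivative 2) (at u)"
    by (auto intro!: derivative_eq_intros)
  ultimately show ?thesis
    unfolding odd_root_affine_def using DERIV_chain2 by (fastforce simp: mult.commute)
qed

text \<open>The moments of the odd root: an antiderivative of its k-th power is a multiple of its
  (k + n)-th power, which is continuous across the singular point u = 1/2.\<close>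
lemma odd_root_affine_moment:
  assumes "odd n"
  shows "((\<lambda>u. odd_root_affine n u ^ k) has_integral
            real n / (2 * (real k + real n)) * (1 + (-1)^k)) {0..1}"
proof -
  have n0: "n > 0" using assms by (rule odd_pos)
  define c where "c = real n / (2 * (real k + real n))"
  define F where "F u = c * odd_root_affine n u ^ (k + n)" for u
  have "((\<lambda>u. odd_root_affine n u ^ k) has_integral (F 1 - F 0)) {0..1}"
  proof (rule fundamental_theorem_of_calculus_interior_strong[of "{1/2}"])
    fix x :: real assume "x \<in> {0<..<1} - {1/2}"
    then have x: "x \<noteq> 1/2" by auto
    let ?p = "odd_root_affine n x"
    have p0: "?p \<noteq> 0" using x n0 by (simp add: odd_root_affine_def)
    have "?p ^ (k + n - Suc 0) = ?p ^ k * ?p ^ (n - 1)"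
      using n0 by (simp add: power_add[symmetric])
    then have "c * (real (k + n) * (2 * inverse (real n * ?p ^ (n - 1)) * ?p ^ (k + n - Suc 0)))
                 = (c * real (k + n)) * (2 / real n) * ?p ^ k"
      using p0 by (simp add: field_simps)
    also have "c * real (k + n) = real n / 2"
      using n0 by (simp add: c_def field_simps)
    finally have derivative_value:
      "c * (real (k + n) * (2 * inverse (real n * ?p ^ (n - 1)) * ?p ^ (k + n - Suc 0))) = ?p ^ k"
      using n0 by simp
    have "(F has_real_derivative
            c * (real (k + n) * (2 * inverse (real n * ?p ^ (n - 1)) * ?p ^ (k + n - Suc 0)))) (at x)"
      unfolding F_def by (intro DERIV_cmult DERIV_power odd_root_affine_deriv assms x)
    then show "(F has_vector_derivative ?p ^ k) (at x)"
      unfolding derivative_value has_real_derivative_iff_has_vector_derivative .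
  qed (auto simp: F_def odd_root_affine_def intro!: continuous_intros)
  moreover have "F 1 - F 0 = c * (1 + (-1)^k)"
    using assms n0 by (simp add: F_def odd_root_affine_def real_root_minus power_add algebra_simps)
  ultimately show ?thesis by (simp add: c_def)
qed

lemma root_kernel_factor:
  "root n (4 * (t - 1/2) * (u - 1/2)) = odd_root_affine n t * odd_root_affine n u"
proof -
  have "4 * (t - 1/2) * (u - 1/2) = (2*t - 1) * (2*u - 1)" by (simp add: algebra_simps)
  then show ?thesis unfolding odd_root_affine_def by (simp add: real_root_mult)
qed

lemma odd_root_affine_abs_le_1:
  assumes "u \<in> {0..1}"
  shows "\<bar>odd_root_affine n u\<bar> \<le> 1"
proof (cases "n = 0")
  case False
  from assms have "\<bar>2*u - 1\<bar> \<le> 1" by auto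
  with False show ?thesis unfolding odd_root_affine_def by (simp flip: real_root_abs)
qed (simp add: odd_root_affine_def)

text \<open>Continuity, and the zero at u = 1/2 that separates the two fixed points.\<close>
lemma odd_root_affine_continuous: "continuous_on S (odd_root_affine n)"
  unfolding odd_root_affine_def by (intro continuous_intros)

lemma odd_root_affine_half: "odd_root_affine n (1/2) = 0"
  unfolding odd_root_affine_def by simp

text \<open>For n = 7 the moments of orders 0 to 4 are 1, 0, 7/9, 0, 7/11; hence the integral of a
  quartic polynomial in the seventh root.\<close>
lemma quartic_root7_integral:
  fixes c0 c1 c2 c3 c4 :: real
  defines "p \<equiv> odd_root_affine 7"
  shows "((\<lambda>u. c0 + c1 * p u + c2 * p u ^ 2 + c3 * p u ^ 3 + c4 * p u ^ 4) has_integral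
            c0 + c2 * (7/9) + c4 * (7/11)) {0..1}"
proof -
  have moment: "((\<lambda>u. c * p u ^ k) has_integral c * (7 / (2 * (real k + 7)) * (1 + (-1)^k))) {0..1}"
    for c :: real and k :: nat
    unfolding p_def by (intro has_integral_mult_right) (use odd_root_affine_moment[of 7 k] in simp)
  have "((\<lambda>u. c0 * p u ^ 0 + c1 * p u ^ 1 + c2 * p u ^ 2 + c3 * p u ^ 3 + c4 * p u ^ 4) has_integral
          c0 * 1 + c1 * 0 + c2 * (7/9) + c3 * 0 + c4 * (7/11)) {0..1}"
    by (intro has_integral_add moment[THEN has_integral_eq_rhs]) simp_all
  then show ?thesis by simp
qed

lemma H3_affine:
  "H3 (\<lambda>u. A + B * odd_root_affine 7 u) t =
     (A^3 + 7/3 * A * B^2) + (7/6 * A^2 * B + 7/22 * B^3) * odd_root_affine 7 t"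
proof -
  let ?p = "odd_root_affine 7"
  define q where "q = ?p t / 2"
  have integrand:
    "(\<lambda>u. (1 + (1/2) * root 7 (4 * (t - 1/2) * (u - 1/2))) * (A + B * ?p u) ^ 3)
     = (\<lambda>u. A^3 + (3*A^2*B + q*A^3) * ?p u + (3*A*B^2 + 3*q*A^2*B) * ?p u ^ 2
             + (B^3 + 3*q*A*B^2) * ?p u ^ 3 + (q*B^3) * ?p u ^ 4)"
    unfolding root_kernel_factor q_def
    by (rule ext) (simp add: algebra_simps power2_eq_square power3_eq_cube power4_eq_xxxx)
  show ?thesis
    unfolding H3_def integrand
    by (rule integral_unique[OF quartic_root7_integral[THEN has_integral_eq_rhs]])
       (simp add: q_def algebra_simps)
qed

lemma H3_affine_fixed_point:
  assumes "A^3 + 7/3 * A * B^2 = A" and "7/6 * A^2 * B + 7/22 * B^3 = B"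
  shows "H3 (\<lambda>u. A + B * odd_root_affine 7 u) t = A + B * odd_root_affine 7 t"
  using H3_affine[of A B t] assms by simp

lemma affine_root_positive:
  assumes "\<bar>B\<bar> < A" and "u \<in> {0..1}"
  shows "A + B * odd_root_affine n u > 0"
proof -
  have "\<bar>B * odd_root_affine n u\<bar> \<le> \<bar>B\<bar>"
    using odd_root_affine_abs_le_1[OF assms(2)] by (simp add: abs_mult mult_left_le)
  with assms(1) show ?thesis by linarith
qed

theorem proposition4p1:
  shows "\<exists>f g :: real \<Rightarrow> real.
           continuous_on {0..1} f \<and> continuous_on {0..1} g \<and>
           (\<forall>t\<in>{0..1}. f t > 0) \<and> (\<forall>t\<in>{0..1}. g t > 0) \<and>
           (\<forall>t\<in>{0..1}. H3 f t = f t) \<and> (\<forall>t\<in>{0..1}. H3 g t = g t) \<and>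
           (\<exists>t\<in>{0..1}. f t \<noteq> g t)"
proof -
  define A :: real where "A = sqrt (399/476)"
  define B :: real where "B = sqrt (33/476)"
  have A2: "A^2 = 399/476" and B2: "B^2 = 33/476" by (simp_all add: A_def B_def)
  have "A^3 + 7/3 * A * B^2 = A" "7/6 * A^2 * B + 7/22 * B^3 = B"
    by (simp_all add: power3_eq_cube A2 B2 flip: power2_eq_square)
  then have fixed: "H3 (\<lambda>u. A + B * odd_root_affine 7 u) t = A + B * odd_root_affine 7 t" for t
    by (rule H3_affine_fixed_point)
  have "H3 (\<lambda>u. 1 + 0 * odd_root_affine 7 u) t = 1 + 0 * odd_root_affine 7 t" for t
    by (rule H3_affine_fixed_point) simp_all
  then have constant_fixed: "H3 (\<lambda>u. 1) t = 1" for t by simp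
  have "\<bar>B\<bar> < A" by (simp add: A_def B_def)
  then have positive: "A + B * odd_root_affine 7 u > 0" if "u \<in> {0..1}" for u
    using affine_root_positive that by blast
  have "A \<noteq> 1" using A2 by auto
  then have "A + B * odd_root_affine 7 (1/2) \<noteq> 1" by (simp add: odd_root_affine_half)
  then show ?thesis
    using fixed constant_fixed positive
    by (intro exI[of _ "\<lambda>u. A + B * odd_root_affine 7 u"] exI[of _ "\<lambda>u. 1"])
       (auto intro!: continuous_intros odd_root_affine_continuous)
qed

end
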